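(* Let $n\ge 2$ and $N=\{1,\dots,n\}$. Consider the randomized selection mechanism Simple $k$-sample on $\mathcal{G}_n$, with $k=\left\lceil 4^{1/3} n^{2/3} \ln^{1/3} n\right\rceil$: it forms a sample $S$ by selecting $k$ times a vertex of $N$ uniformly at random with replacement ($S$ is a multiset), and returns as winner (if any) a vertex $w\in\arg\max_{u\in N\setminus S}\delta_S(u,\mathbf{x})$, where in $\delta_S(u,\mathbf{x})$ each edge from a vertex of $S$ is counted with the multiplicity of that vertex in $S$. Then this mechanism is impartial and $\Theta(n^{2/3}\ln^{1/3} n)$-additive, i.e., $\max_{\mathbf{x}\in\mathcal{G}_n}\{\Delta(\mathbf{x})-\mathbb{E}[\delta(f(\mathbf{x}))]\}=O(n^{2/3}\ln^{1/3}n)$.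
   Context: $\mathcal{G}_n$ is the set of all directed graphs (nomination profiles) on vertex set $N=\{1,\dots,n\}$ with no self-loops; each vertex may have any out-degree (including $0$). For a profile $\mathbf{x}$, $x_u$ is the set of outgoing edges of $u$, and $(x'_u,\mathbf{x}_{-u})$ is the profile in which $u$'s outgoing edges are replaced by $x'_u$. $\delta_S(u,\mathbf{x})$ is the in-degree of $u$ counting only edges originating from $S$; $\delta(u,\mathbf{x})=\delta_N(u,\mathbf{x})$; $\Delta(\mathbf{x})=\max_u\delta(u,\mathbf{x})$. A selection mechanism $f$ maps each profile to a probability distribution over the vertices together with the option of no winner. It is impartial if for every profile $\mathbf{x}$, every vertex $u$ and every alternative set of outgoing edges $x'_u$, the probability that $u$ is selected is the same under $\mathbf{x}$ and $(x'_u,\mathbf{x}_{-u})$. $\mathbb{E}[\delta(f(\mathbf{x}))]=\sum_u \Pr[f(\mathbf{x})=u]\,\delta(u,\mathbf{x})$ (no winner contributes $0$). $f$ is $\alpha(n)$-additive if $\max_{\mathbf{x}\in\mathcal{G}_n}\{\Delta(\mathbf{x})-\mathbb{E}[\delta(f(\mathbf{x}))]\}\le\alpha(n)$ for every $n$. *)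

theory Defs
  imports "HOL-Probability.Probability" "HOL-Library.Landau_Symbols"
begin

text \<open>Vertex set N = {1..n}. A nomination profile is an edge relation on N without self-loops;
  a pair (v,u) means v nominates u.\<close>

definition verts :: "nat \<Rightarrow> nat set" where
  "verts n = {1..n}"

definition profile :: "nat \<Rightarrow> (nat \<times> nat) set \<Rightarrow> bool" where
  "profile n E \<longleftrightarrow> E \<subseteq> verts n \<times> verts n \<and> (\<forall>u. (u, u) \<notin> E)"

definition profiles :: "nat \<Rightarrow> (nat \<times> nat) set set" where
  "profiles n = {E. profile n E}"

definition indeg_from :: "nat set \<Rightarrow> (nat \<times> nat) set \<Rightarrow> nat \<Rightarrow> nat" where
  "indeg_from S E u = card {v \<in> S. (v, u) \<in> E}"

definition indeg :: "nat \<Rightarrow> (nat \<times> nat) set \<Rightarrow> nat \<Rightarrow> nat" where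
  "indeg n E u = indeg_from (verts n) E u"

definition maxdeg :: "nat \<Rightarrow> (nat \<times> nat) set \<Rightarrow> nat" where
  "maxdeg n E = Max (indeg n E ` verts n)"

text \<open>In-degree counting edges from a sample (multiset, represented by the list of draws),
  each edge from a sampled vertex counted with that vertex's multiplicity.\<close>
definition indeg_sample :: "nat list \<Rightarrow> (nat \<times> nat) set \<Rightarrow> nat \<Rightarrow> nat" where
  "indeg_sample xs E u = (\<Sum>v\<in>set xs. count (mset xs) v * (if (v, u) \<in> E then 1 else 0))"

text \<open>A selection mechanism (for fixed n): profile \<mapsto> distribution over winners (None = no winner).\<close>
type_synonym mechanism = "(nat \<times> nat) set \<Rightarrow> nat option pmf"

definition impartial :: "nat \<Rightarrow> mechanism \<Rightarrow> bool" where
  "impartial n f \<longleftrightarrow>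
     (\<forall>E E' u. profile n E \<and> profile n E' \<and> u \<in> verts n \<and>
        (\<forall>v w. v \<noteq> u \<longrightarrow> ((v, w) \<in> E \<longleftrightarrow> (v, w) \<in> E')) \<longrightarrow>
        pmf (f E) (Some u) = pmf (f E') (Some u))"

definition exp_deg :: "nat \<Rightarrow> mechanism \<Rightarrow> (nat \<times> nat) set \<Rightarrow> real" where
  "exp_deg n f E = (\<Sum>u\<in>verts n. pmf (f E) (Some u) * real (indeg n E u))"

definition worst_gap :: "nat \<Rightarrow> mechanism \<Rightarrow> real" where
  "worst_gap n f = Max ((\<lambda>E. real (maxdeg n E) - exp_deg n f E) ` profiles n)"

text \<open>Simple k-sample: k i.i.d. uniform draws from N (uniform over length-k sequences);
  winner is a maximiser of indeg_sample over N minus the sample, chosen from the argmax set by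
  the tie-breaking rule tb; no winner if N minus the sample is empty.\<close>
definition sample_argmax :: "nat \<Rightarrow> (nat \<times> nat) set \<Rightarrow> nat list \<Rightarrow> nat set" where
  "sample_argmax n E xs = {u \<in> verts n - set xs.
      \<forall>v \<in> verts n - set xs. indeg_sample xs E v \<le> indeg_sample xs E u}"

definition simple_k_sample :: "(nat set \<Rightarrow> nat) \<Rightarrow> nat \<Rightarrow> nat \<Rightarrow> mechanism" where
  "simple_k_sample tb k n E =
     map_pmf (\<lambda>xs. if verts n - set xs = {} then None else Some (tb (sample_argmax n E xs)))
       (pmf_of_set {xs. length xs = k \<and> set xs \<subseteq> verts n})"

definition k_opt :: "nat \<Rightarrow> nat" where
  "k_opt n = nat \<lceil>4 powr (1/3) * real n powr (2/3) * ln (real n) powr (1/3)\<rceil>"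

end

(*
  Impartiality: a sampled vertex is never selected, and the nominations of an unsampled vertex
  are not counted by the sample, so whether u wins does not depend on u's own nominations.

  Additive bound: let u have maximum in-degree Delta. The sample in-degree of a vertex v is a
  sum of k independent indicators with mean k delta(v) / n, so by Hoeffding's inequality and a
  union bound all sample in-degrees are within t of their means, except with probability
  2 n exp(-2 t^2 / k); and u is sampled with probability at most k / n. Outside these events the
  winner w has sample in-degree at least that of u, whence delta(w) > Delta - 2 t n / k; inside
  them the loss is at most n. So the loss is at most k + 2 t n / k + 2 n^2 exp(-2 t^2 / k), and
  for k close to r = n^(2/3) ln^(1/3) n and t = r k / n each term is O(r), using r^3 = n^2 ln n.
*)

theory Submission
  imports Defs
begin

definition sample_winner ::
    "(nat set \<Rightarrow> nat) \<Rightarrow> nat \<Rightarrow> (nat \<times> nat) set \<Rightarrow> nat list \<Rightarrow> nat option" where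
  "sample_winner tb n E xs =
     (if verts n - set xs = {} then None else Some (tb (sample_argmax n E xs)))"

lemma simple_k_sample_eq_map_sample_winner:
  "simple_k_sample tb k n E =
     map_pmf (sample_winner tb n E) (pmf_of_set {xs. length xs = k \<and> set xs \<subseteq> verts n})"
  unfolding simple_k_sample_def sample_winner_def ..

lemma sample_argmax_nonempty:
  assumes "verts n - set xs \<noteq> {}"
  shows "sample_argmax n E xs \<noteq> {}"
proof -
  let ?F = "verts n - set xs" and ?h = "indeg_sample xs E"
  have "finite (?h ` ?F)" by (simp add: verts_def)
  then have "Max (?h ` ?F) \<in> ?h ` ?F" "\<forall>v\<in>?F. ?h v \<le> Max (?h ` ?F)"
    using assms by auto
  then show ?thesis unfolding sample_argmax_def by fastforce
qed

lemma sample_winner_in_sample_argmax: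
  assumes tb: "\<forall>A. A \<noteq> {} \<longrightarrow> tb A \<in> A" and "sample_winner tb n E xs = Some w"
  shows "w \<in> sample_argmax n E xs"
  using assms sample_argmax_nonempty[of n xs E]
  by (auto simp: sample_winner_def split: if_splits)

lemma indeg_sample_cong:
  assumes "\<forall>v\<in>set xs. \<forall>w. (v, w) \<in> E \<longleftrightarrow> (v, w) \<in> E'"
  shows "indeg_sample xs E u = indeg_sample xs E' u"
  unfolding indeg_sample_def using assms by (intro sum.cong) auto

lemma sample_winner_eq_Some_cong:
  assumes tb: "\<forall>A. A \<noteq> {} \<longrightarrow> tb A \<in> A"
    and agree: "\<forall>v w. v \<noteq> u \<longrightarrow> ((v, w) \<in> E \<longleftrightarrow> (v, w) \<in> E')"
  shows "sample_winner tb n E xs = Some u \<longleftrightarrow> sample_winner tb n E' xs = Some u"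
proof (cases "u \<in> set xs")
  case True
  then have "sample_winner tb n F xs \<noteq> Some u" for F
    using sample_winner_in_sample_argmax[OF tb] by (auto simp: sample_argmax_def)
  then show ?thesis by blast
next
  case False
  then have "indeg_sample xs E = indeg_sample xs E'"
    using agree by (intro ext indeg_sample_cong) auto
  then show ?thesis by (simp add: sample_winner_def sample_argmax_def)
qed

theorem impartial_simple_k_sample:
  assumes tb: "\<forall>A. A \<noteq> {} \<longrightarrow> tb A \<in> A"
  shows "impartial n (simple_k_sample tb k n)"
  unfolding impartial_def simple_k_sample_eq_map_sample_winner pmf_map
proof (intro allI impI, elim conjE)
  fix E E' :: "(nat \<times> nat) set" and u :: nat
  let ?L = "pmf_of_set {xs. length xs = k \<and> set xs \<subseteq> verts n}"
  assume "\<forall>v w. v \<noteq> u \<longrightarrow> ((v, w) \<in> E \<longleftrightarrow> (v, w) \<in> E')"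
  then have "sample_winner tb n E -` {Some u} = sample_winner tb n E' -` {Some u}"
    using sample_winner_eq_Some_cong[OF tb] by blast
  then show "measure_pmf.prob ?L (sample_winner tb n E -` {Some u}) =
             measure_pmf.prob ?L (sample_winner tb n E' -` {Some u})"
    by simp
qed

lemma bij_betw_map_upt_PiE_dflt:
  "bij_betw (\<lambda>g. map g [0..<k]) (PiE_dflt {..<k} d (\<lambda>_. A)) {xs. length xs = k \<and> set xs \<subseteq> A}"
proof (rule bij_betw_byWitness)
  show "\<forall>g\<in>PiE_dflt {..<k} d (\<lambda>_. A). (\<lambda>i. if i < k then map g [0..<k] ! i else d) = g"
    by (auto simp: PiE_dflt_def)
  show "\<forall>xs\<in>{xs. length xs = k \<and> set xs \<subseteq> A}.
          map (\<lambda>i. if i < k then xs ! i else d) [0..<k] = xs"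
    by (auto intro: nth_equalityI)
qed (auto simp: PiE_dflt_def)

lemma pmf_of_set_lists_eq_map_Pi_pmf:
  assumes "finite A" "A \<noteq> {}"
  shows "pmf_of_set {xs. length xs = k \<and> set xs \<subseteq> A} =
           map_pmf (\<lambda>g. map g [0..<k]) (Pi_pmf {..<k} d (\<lambda>_. pmf_of_set A))"
proof -
  have "Pi_pmf {..<k} d (\<lambda>_. pmf_of_set A) = pmf_of_set (PiE_dflt {..<k} d (\<lambda>_. A))"
    using assms by (intro Pi_pmf_of_set) auto
  moreover obtain a where "a \<in> A" using assms by blast
  then have "(\<lambda>i. if i < k then a else d) \<in> PiE_dflt {..<k} d (\<lambda>_. A)"
    by (simp add: PiE_dflt_def)
  ultimately show ?thesis
    using assms by (simp add: map_pmf_of_set_bij_betw[OF bij_betw_map_upt_PiE_dflt] finite_PiE_dflt)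
qed

lemma indeg_sample_map_upt:
  "real (indeg_sample (map g [0..<k]) E u) = (\<Sum>i<k. indicator {v. (v, u) \<in> E} (g i))"
proof -
  have "indeg_sample xs E u = (\<Sum>v\<leftarrow>xs. if (v, u) \<in> E then 1 else 0)" for xs
    unfolding indeg_sample_def by (simp add: sum_list_map_eq_sum_count count_mset)
  then have "real (indeg_sample (map g [0..<k]) E u) = (\<Sum>i<k. real (if (g i, u) \<in> E then 1 else 0))"
    by (simp add: interv_sum_list_conv_sum_set_nat atLeast0LessThan del: of_nat_eq_iff)
  also have "\<dots> = (\<Sum>i<k. indicator {v. (v, u) \<in> E} (g i))"
    by (intro sum.cong) (auto simp: indicator_def)
  finally show ?thesis .
qed

lemma prob_Pi_pmf_some_draw_eq:
  assumes "finite A" "A \<noteq> {}"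
  shows "measure_pmf.prob (Pi_pmf {..<k} d (\<lambda>_. pmf_of_set A)) {g. \<exists>i<k. g i = u}
           \<le> real k / real (card A)"
proof -
  let ?P = "Pi_pmf {..<k} d (\<lambda>_. pmf_of_set A)"
  have per_draw: "measure_pmf.prob ?P {g. g i = u} \<le> 1 / real (card A)" if "i < k" for i
  proof -
    have "measure_pmf.prob ?P {g. g i = u} = measure_pmf.prob (map_pmf (\<lambda>g. g i) ?P) {u}"
      by (simp add: vimage_def)
    also have "\<dots> = real (card (A \<inter> {u})) / real (card A)"
      using that assms by (simp add: Pi_pmf_component measure_pmf_of_set)
    also have "\<dots> \<le> 1 / real (card A)"
      by (intro divide_right_mono) (auto simp: card_le_Suc0_iff_eq)
    finally show ?thesis .
  qed
  have "{g. \<exists>i<k. g i = u} = (\<Union>i<k. {g. g i = u})" by auto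
  then have "measure_pmf.prob ?P {g. \<exists>i<k. g i = u} \<le> (\<Sum>i<k. measure_pmf.prob ?P {g. g i = u})"
    by (simp add: measure_pmf.finite_measure_subadditive_finite)
  also have "\<dots> \<le> (\<Sum>i<k. 1 / real (card A))"
    using per_draw by (intro sum_mono) auto
  finally show ?thesis by simp
qed

lemma prob_Pi_pmf_count_deviation:
  assumes "finite A" "A \<noteq> {}" "0 < k" "0 \<le> t"
  shows "measure_pmf.prob (Pi_pmf {..<k} d (\<lambda>_. pmf_of_set A))
           {g. t \<le> \<bar>(\<Sum>i<k. indicator B (g i)) - real k * real (card (A \<inter> B)) / real (card A)\<bar>}
         \<le> 2 * exp (-2 * t\<^sup>2 / real k)"
proof -
  let ?P = "Pi_pmf {..<k} d (\<lambda>_. pmf_of_set A)"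
  let ?X = "\<lambda>i g. indicator B (g i) :: real"
  have mean: "measure_pmf.expectation ?P (?X i) = real (card (A \<inter> B)) / real (card A)"
    if "i < k" for i
  proof -
    have "measure_pmf.expectation ?P (?X i) =
            measure_pmf.expectation (map_pmf (\<lambda>g. g i) ?P) (indicator B)"
      by (simp only: integral_map_pmf)
    also have "map_pmf (\<lambda>g. g i) ?P = pmf_of_set A"
      using that by (simp add: Pi_pmf_component)
    also have "measure_pmf.expectation (pmf_of_set A) (indicator B) =
                 real (card (A \<inter> B)) / real (card A)"
      using assms by (simp add: measure_pmf_of_set)
    finally show ?thesis .
  qed
  interpret Hoeffding_ineq "measure_pmf ?P" "{..<k}" ?X "\<lambda>_. 0" "\<lambda>_. 1"
    "\<Sum>i<k. measure_pmf.expectation ?P (?X i)"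
  proof unfold_locales
    show "prob_space.indep_vars (measure_pmf ?P) (\<lambda>_. borel) ?X {..<k}"
      by (intro prob_space.indep_vars_compose2[OF _ indep_vars_Pi_pmf])
         (auto simp: measure_pmf.prob_space_axioms)
  qed auto
  have "measure_pmf.prob ?P {g \<in> space ?P. t \<le> \<bar>(\<Sum>i<k. ?X i g) -
          (\<Sum>i<k. measure_pmf.expectation ?P (?X i))\<bar>}
        \<le> 2 * exp (-2 * t\<^sup>2 / (\<Sum>i<k. (1 - 0)\<^sup>2))"
    using assms by (intro Hoeffding_ineq_abs_ge) auto
  then show ?thesis using mean by simp
qed

lemma prob_Pi_pmf_count_deviations:
  assumes "finite A" "A \<noteq> {}" "0 < k" "0 \<le> t" "finite V"
  shows "measure_pmf.prob (Pi_pmf {..<k} d (\<lambda>_. pmf_of_set A))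
           {g. \<exists>v\<in>V. t \<le> \<bar>(\<Sum>i<k. indicator (B v) (g i)) -
                               real k * real (card (A \<inter> B v)) / real (card A)\<bar>}
         \<le> real (card V) * (2 * exp (-2 * t\<^sup>2 / real k))"
proof -
  let ?P = "Pi_pmf {..<k} d (\<lambda>_. pmf_of_set A)"
  let ?dev = "\<lambda>v. {g. t \<le> \<bar>(\<Sum>i<k. indicator (B v) (g i)) -
                             real k * real (card (A \<inter> B v)) / real (card A)\<bar>}"
  have "measure_pmf.prob ?P (\<Union>v\<in>V. ?dev v) \<le> (\<Sum>v\<in>V. measure_pmf.prob ?P (?dev v))"
    using \<open>finite V\<close> by (intro measure_pmf.finite_measure_subadditive_finite) auto
  also have "\<dots> \<le> (\<Sum>v\<in>V. 2 * exp (-2 * t\<^sup>2 / real k))"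
    using assms by (intro sum_mono prob_Pi_pmf_count_deviation) auto
  finally show ?thesis by (simp add: UN_iff[symmetric] Collect_bex_eq)
qed

lemma indeg_eq_card_Int: "indeg n E v = card (verts n \<inter> {w. (w, v) \<in> E})"
  by (simp add: indeg_def indeg_from_def Int_def)

lemma indeg_le: "indeg n E v \<le> n"
proof -
  have "card (verts n \<inter> {w. (w, v) \<in> E}) \<le> card (verts n)"
    by (intro card_mono) (auto simp: verts_def)
  then show ?thesis by (simp add: indeg_eq_card_Int verts_def)
qed

lemma exp_deg_eq_expectation:
  assumes "set_pmf (f E) \<subseteq> insert None (Some ` verts n)"
  shows "exp_deg n f E =
           measure_pmf.expectation (f E) (case_option 0 (\<lambda>u. real (indeg n E u)))"
proof -
  have "measure_pmf.expectation (f E) (case_option 0 (\<lambda>u. real (indeg n E u))) =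
          (\<Sum>w\<in>Some ` verts n. case_option 0 (\<lambda>u. real (indeg n E u)) w * pmf (f E) w)"
    using assms by (intro integral_measure_pmf_real) (auto simp: verts_def)
  also have "\<dots> = exp_deg n f E"
    by (simp add: exp_deg_def sum.reindex mult.commute)
  finally show ?thesis ..
qed

lemma sample_winner_near_optimal:
  assumes tb: "\<forall>A. A \<noteq> {} \<longrightarrow> tb A \<in> A" and "0 < k" "0 < n"
    and u: "u \<in> verts n - set xs"
    and conc: "\<forall>v\<in>verts n.
      \<bar>real (indeg_sample xs E v) - real k * real (indeg n E v) / real n\<bar> < t"
  shows "\<exists>w. sample_winner tb n E xs = Some w \<and>
           real (indeg n E u) - real (indeg n E w) < 2 * t * real n / real k"
proof -
  have "verts n - set xs \<noteq> {}" using u by blast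
  then obtain w where w: "sample_winner tb n E xs = Some w"
    by (simp add: sample_winner_def)
  then have "w \<in> verts n" and le: "indeg_sample xs E u \<le> indeg_sample xs E w"
    using sample_winner_in_sample_argmax[OF tb w] u by (auto simp: sample_argmax_def)
  define est where "est v = real k * real (indeg n E v) / real n" for v
  have "\<bar>real (indeg_sample xs E w) - est w\<bar> < t" "\<bar>real (indeg_sample xs E u) - est u\<bar> < t"
    using conc u \<open>w \<in> verts n\<close> by (auto simp: est_def)
  then have "est u - est w < 2 * t"
    using of_nat_mono[OF le, where ?'a = real] by linarith
  then have "real k * (real (indeg n E u) - real (indeg n E w)) < 2 * t * real n"
    using \<open>0 < n\<close> by (simp add: est_def field_simps)
  then show ?thesis
    using w \<open>0 < k\<close> by (auto simp: field_simps)
qed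

lemma exp_deg_simple_k_sample:
  assumes tb: "\<forall>A. A \<noteq> {} \<longrightarrow> tb A \<in> A" and "0 < n"
  shows "exp_deg n (simple_k_sample tb k n) E =
           measure_pmf.expectation (Pi_pmf {..<k} 0 (\<lambda>_. pmf_of_set (verts n)))
             (\<lambda>g. case_option 0 (\<lambda>u. real (indeg n E u)) (sample_winner tb n E (map g [0..<k])))"
proof -
  have finA: "finite (verts n)" and Ane: "verts n \<noteq> {}"
    using \<open>0 < n\<close> by (auto simp: verts_def)
  have "sample_winner tb n E xs \<in> insert None (Some ` verts n)" for xs
    using sample_winner_in_sample_argmax[OF tb, of n E xs]
    by (cases "sample_winner tb n E xs") (auto simp: sample_argmax_def)
  then have "set_pmf (simple_k_sample tb k n E) \<subseteq> insert None (Some ` verts n)"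
    by (auto simp: simple_k_sample_eq_map_sample_winner)
  then show ?thesis
    by (simp add: exp_deg_eq_expectation simple_k_sample_eq_map_sample_winner
        pmf_of_set_lists_eq_map_Pi_pmf[OF finA Ane, where d = 0])
qed

lemma expectation_le_of_bad_event:
  fixes f :: "'a \<Rightarrow> real"
  assumes "finite (set_pmf p)"
    and good: "\<And>x. x \<notin> B \<Longrightarrow> f x \<le> a" and bad: "\<And>x. x \<in> B \<Longrightarrow> f x \<le> a + M"
  shows "measure_pmf.expectation p f \<le> a + M * measure_pmf.prob p B"
proof -
  have int: "integrable p g" for g :: "'a \<Rightarrow> real"
    using assms(1) by (rule integrable_measure_pmf_finite)
  have "measure_pmf.expectation p f \<le> measure_pmf.expectation p (\<lambda>x. a + M * indicator B x)"
    using int good bad by (intro integral_mono) (auto simp: indicator_def)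
  also have "\<dots> = a + M * measure_pmf.prob p B"
    using int by simp
  finally show ?thesis .
qed

lemma gap_simple_k_sample_le:
  assumes tb: "\<forall>A. A \<noteq> {} \<longrightarrow> tb A \<in> A" and "0 < n" "0 < k" "0 \<le> t"
  shows "real (maxdeg n E) - exp_deg n (simple_k_sample tb k n) E
           \<le> real k + 2 * t * real n / real k + 2 * (real n)\<^sup>2 * exp (-2 * t\<^sup>2 / real k)"
proof -
  let ?A = "verts n"
  let ?P = "Pi_pmf {..<k} 0 (\<lambda>_. pmf_of_set ?A)"
  let ?winner = "\<lambda>g. sample_winner tb n E (map g [0..<k])"
  let ?deg = "case_option 0 (\<lambda>u. real (indeg n E u))"
  let ?scale = "2 * t * real n / real k"
  have finA: "finite ?A" and cardA: "card ?A = n" and Ane: "?A \<noteq> {}"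
    using \<open>0 < n\<close> by (auto simp: verts_def)
  have finP: "finite (set_pmf ?P)"
    using finA Ane by (auto simp: set_Pi_pmf intro!: finite_PiE_dflt)
  have "maxdeg n E \<in> indeg n E ` ?A"
    unfolding maxdeg_def using finA Ane by (intro Max_in) auto
  then obtain us where us: "us \<in> ?A" "indeg n E us = maxdeg n E" by auto
  define hit where "hit = {g. \<exists>i<k. g i = us}"
  define dev where "dev = {g. \<exists>v\<in>?A. t \<le> \<bar>(\<Sum>i<k. indicator {w. (w, v) \<in> E} (g i)) -
      real k * real (card (?A \<inter> {w. (w, v) \<in> E})) / real (card ?A)\<bar>}"
  have good: "real (maxdeg n E) - ?deg (?winner g) \<le> ?scale" if "g \<notin> hit \<union> dev" for g
  proof -
    have "us \<in> ?A - set (map g [0..<k])"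
      using that us by (auto simp: hit_def)
    moreover have "\<forall>v\<in>?A. \<bar>real (indeg_sample (map g [0..<k]) E v) -
        real k * real (indeg n E v) / real n\<bar> < t"
      using that by (auto simp: dev_def indeg_sample_map_upt indeg_eq_card_Int cardA)
    ultimately obtain w where "?winner g = Some w"
      and "real (indeg n E us) - real (indeg n E w) < ?scale"
      using sample_winner_near_optimal[OF tb \<open>0 < k\<close> \<open>0 < n\<close>] by blast
    then show ?thesis using us by simp
  qed
  have bad: "real (maxdeg n E) - ?deg (?winner g) \<le> ?scale + real n" for g
  proof -
    have "real (maxdeg n E) \<le> real n" using us indeg_le[of n E us] by simp
    moreover have "?deg (?winner g) \<ge> 0" by (cases "?winner g") auto
    moreover have "0 \<le> ?scale" using \<open>0 \<le> t\<close> by simp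
    ultimately show ?thesis by linarith
  qed
  have "real (maxdeg n E) - exp_deg n (simple_k_sample tb k n) E =
          measure_pmf.expectation ?P (\<lambda>g. real (maxdeg n E) - ?deg (?winner g))"
    using integrable_measure_pmf_finite[OF finP, where 'b = real]
    by (simp add: exp_deg_simple_k_sample[OF tb \<open>0 < n\<close>])
  also have "\<dots> \<le> ?scale + real n * measure_pmf.prob ?P (hit \<union> dev)"
    using finP good bad by (rule expectation_le_of_bad_event)
  also have "\<dots> \<le> ?scale + real n * (measure_pmf.prob ?P hit + measure_pmf.prob ?P dev)"
    by (intro add_left_mono mult_left_mono measure_Un_le) auto
  also have "\<dots> \<le> ?scale + real n * (real k / real n + real n * (2 * exp (-2 * t\<^sup>2 / real k)))"
    unfolding hit_def dev_def
    using prob_Pi_pmf_some_draw_eq[OF finA Ane]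
      prob_Pi_pmf_count_deviations[OF finA Ane \<open>0 < k\<close> \<open>0 \<le> t\<close> finA]
    by (intro add_left_mono mult_left_mono add_mono) (auto simp: cardA)
  also have "\<dots> = real k + ?scale + 2 * (real n)\<^sup>2 * exp (-2 * t\<^sup>2 / real k)"
    using \<open>0 < n\<close> by (simp add: field_simps power2_eq_square)
  finally show ?thesis .
qed

lemma finite_profiles: "finite (profiles n)"
proof (rule finite_subset)
  show "profiles n \<subseteq> Pow (verts n \<times> verts n)" by (auto simp: profiles_def profile_def)
qed (simp add: verts_def)

lemma worst_gap_nonneg:
  assumes "0 < n"
  shows "0 \<le> worst_gap n f"
proof -
  have "{} \<in> profiles n" by (simp add: profiles_def profile_def)
  then have "real (maxdeg n {}) - exp_deg n f {} \<le> worst_gap n f"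
    unfolding worst_gap_def using finite_profiles by (intro Max_ge) auto
  moreover have "real (maxdeg n {}) - exp_deg n f {} = 0"
    using assms by (simp add: maxdeg_def exp_deg_def indeg_def indeg_from_def verts_def)
  ultimately show ?thesis by simp
qed

lemma worst_gap_le:
  assumes "\<And>E. profile n E \<Longrightarrow> real (maxdeg n E) - exp_deg n f E \<le> c"
  shows "worst_gap n f \<le> c"
proof -
  have "{} \<in> profiles n" by (simp add: profiles_def profile_def)
  then show ?thesis
    unfolding worst_gap_def using assms finite_profiles
    by (subst Max_le_iff) (auto simp: profiles_def)
qed

lemma rate_cube:
  assumes "1 < n"
  shows "(real n powr (2/3) * ln (real n) powr (1/3)) ^ 3 = (real n)\<^sup>2 * ln (real n)"
proof -
  have "(x powr r) ^ 3 = x powr (3 * r)" if "0 < x" for x r :: real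
    using that by (simp add: powr_realpow[symmetric] powr_powr mult.commute)
  then show ?thesis
    using assms by (simp add: power_mult_distrib powr_realpow)
qed

lemma rate_ge_1:
  assumes "3 \<le> n"
  shows "1 \<le> real n powr (2/3) * ln (real n) powr (1/3)"
proof -
  have "exp 1 \<le> real n" using exp_le assms by linarith
  then have "1 \<le> ln (real n)" using assms by (subst ln_ge_iff) auto
  moreover have "1 \<le> real n" using assms by simp
  ultimately show ?thesis
    using mult_mono[of 1 "real n powr (2/3)" 1 "ln (real n) powr (1/3)"] by (simp add: ge_one_powr_ge_zero)
qed

lemma k_opt_bounds:
  assumes "3 \<le> n"
  defines "r \<equiv> real n powr (2/3) * ln (real n) powr (1/3)"
  shows "r \<le> real (k_opt n)" and "real (k_opt n) \<le> 4 * r + 1"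
proof -
  have r1: "1 \<le> r" using rate_ge_1[OF assms(1)] by (simp add: r_def)
  have "1 \<le> (4::real) powr (1/3)" "(4::real) powr (1/3) \<le> 4"
    by (auto intro: ge_one_powr_ge_zero order.trans[OF powr_mono[of "1/3" 1]])
  moreover have "real (k_opt n) = of_int \<lceil>4 powr (1/3) * r\<rceil>"
    using r1 by (simp add: k_opt_def r_def mult.assoc)
  ultimately show "r \<le> real (k_opt n)" and "real (k_opt n) \<le> 4 * r + 1"
    using r1 by (auto intro: order.trans[OF _ le_of_int_ceiling] mult_right_mono
        order.trans[OF of_int_ceiling_le_add_one] simp: mult_left_le)
qed

lemma gap_k_opt_le:
  assumes tb: "\<forall>A. A \<noteq> {} \<longrightarrow> tb A \<in> A" and n: "3 \<le> n"
  shows "real (maxdeg n E) - exp_deg n (simple_k_sample tb (k_opt n) n) E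
           \<le> 9 * (real n powr (2/3) * ln (real n) powr (1/3))"
proof -
  define r where "r = real n powr (2/3) * ln (real n) powr (1/3)"
  define k where "k = k_opt n"
  define t where "t = r * real k / real n"
  have r1: "1 \<le> r" using rate_ge_1[OF n] by (simp add: r_def)
  have k_lo: "r \<le> real k" and k_hi: "real k \<le> 4 * r + 1"
    using k_opt_bounds[OF n] by (simp_all add: k_def r_def)
  have "0 < n" "0 < k" using n r1 k_lo by auto
  have "ln (real n) \<le> r ^ 2 * real k / (real n)\<^sup>2"
  proof -
    have "(real n)\<^sup>2 * ln (real n) = r ^ 2 * r"
      using rate_cube[of n] n by (simp add: r_def power3_eq_cube power2_eq_square)
    also have "\<dots> \<le> r ^ 2 * real k" using k_lo by (intro mult_left_mono) auto
    finally show ?thesis using \<open>0 < n\<close> by (simp add: field_simps)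
  qed
  moreover have "-2 * t\<^sup>2 / real k = -2 * (r ^ 2 * real k / (real n)\<^sup>2)"
    using \<open>0 < k\<close> by (simp add: t_def power2_eq_square field_simps)
  ultimately have "exp (-2 * t\<^sup>2 / real k) \<le> exp (-2 * ln (real n))"
    by simp
  also have "\<dots> = 1 / (real n)\<^sup>2"
  proof -
    have "2 * ln (real n) = ln ((real n)\<^sup>2)"
      using \<open>0 < n\<close> by (simp add: ln_realpow)
    then have "exp (2 * ln (real n)) = (real n)\<^sup>2"
      using \<open>0 < n\<close> by simp
    then show ?thesis by (simp add: exp_minus inverse_eq_divide)
  qed
  finally have "2 * (real n)\<^sup>2 * exp (-2 * t\<^sup>2 / real k) \<le> 2"
    using \<open>0 < n\<close> by (simp add: field_simps)
  moreover have "2 * t * real n / real k = 2 * r"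
    using \<open>0 < n\<close> \<open>0 < k\<close> by (simp add: t_def)
  moreover have "0 \<le> t" using r1 by (simp add: t_def)
  ultimately have "real (maxdeg n E) - exp_deg n (simple_k_sample tb k n) E \<le> real k + 2 * r + 2"
    using gap_simple_k_sample_le[OF tb \<open>0 < n\<close> \<open>0 < k\<close>, of t E] by linarith
  then show ?thesis using k_hi r1 by (simp add: k_def r_def)
qed

theorem mainTheorem1:
  fixes tb :: "nat set \<Rightarrow> nat"
  assumes tb: "\<forall>A. A \<noteq> {} \<longrightarrow> tb A \<in> A"
  shows "(\<forall>n\<ge>2. impartial n (simple_k_sample tb (k_opt n) n)) \<and>
         (\<lambda>n. worst_gap n (simple_k_sample tb (k_opt n) n))
           \<in> O(\<lambda>n. real n powr (2/3) * ln (real n) powr (1/3))"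
proof
  show "\<forall>n\<ge>2. impartial n (simple_k_sample tb (k_opt n) n)"
    using impartial_simple_k_sample[OF tb] by blast
  have "\<bar>worst_gap n (simple_k_sample tb (k_opt n) n)\<bar>
          \<le> 9 * \<bar>real n powr (2/3) * ln (real n) powr (1/3)\<bar>" if "3 \<le> n" for n
    using that worst_gap_nonneg[of n] worst_gap_le[OF gap_k_opt_le[OF tb that]] rate_ge_1[OF that]
    by simp
  then show "(\<lambda>n. worst_gap n (simple_k_sample tb (k_opt n) n))
               \<in> O(\<lambda>n. real n powr (2/3) * ln (real n) powr (1/3))"
    by (intro bigoI[where c = 9] eventually_at_top_linorder[THEN iffD2]) auto
qed
end
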